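(* Let $E$ be a Fréchet space, let $E^*$ be its topological dual (the space of continuous linear functionals $E\to\mathbb{R}$) endowed with the weak$^*$ topology, let $[a,b]\subset\mathbb{R}$ be a compact interval and let $f:[a,b]\to E^*$ be continuous. Then the closed convex hull $\overline{\mathrm{co}}(f([a,b]))$ is compact in $E^*$.
   Context: The closed convex hull $\overline{\mathrm{co}}(K)$ of a subset $K$ of a topological vector space is the closure of the set of all finite convex combinations of elements of $K$. *)

theory Defs
  imports "HOL-Analysis.Analysis"
begin

definition seminorm :: "('a::real_vector \<Rightarrow> real) \<Rightarrow> bool" where
  "seminorm q \<longleftrightarrow> (\<forall>x y. q (x + y) \<le> q x + q y) \<and> (\<forall>c x. q (c *\<^sub>R x) = \<bar>c\<bar> * q x)"

definition seminorm_topology :: "(nat \<Rightarrow> 'a::real_vector \<Rightarrow> real) \<Rightarrow> 'a topology" where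
  "seminorm_topology p = topology (\<lambda>U. \<forall>x\<in>U. \<exists>F e. finite F \<and> e > 0 \<and>
      {y. \<forall>n\<in>F. p n (y - x) < e} \<subseteq> U)"

text \<open>Frechet space: Hausdorff, locally convex, metrizable (topology given by countably many
seminorms), complete.\<close>
definition frechet_seminorms :: "(nat \<Rightarrow> 'a::real_vector \<Rightarrow> real) \<Rightarrow> bool" where
  "frechet_seminorms p \<longleftrightarrow>
     (\<forall>n. seminorm (p n)) \<and>
     (\<forall>x. x \<noteq> 0 \<longrightarrow> (\<exists>n. p n x \<noteq> 0)) \<and>
     (\<forall>s::nat \<Rightarrow> 'a. (\<forall>n e. e > 0 \<longrightarrow> (\<exists>N. \<forall>i\<ge>N. \<forall>j\<ge>N. p n (s i - s j) < e)) \<longrightarrow>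
        (\<exists>l. \<forall>n e. e > 0 \<longrightarrow> (\<exists>N. \<forall>i\<ge>N. p n (s i - l) < e)))"

definition top_dual :: "(nat \<Rightarrow> 'a::real_vector \<Rightarrow> real) \<Rightarrow> ('a \<Rightarrow> real) set" where
  "top_dual p = {\<phi>. linear \<phi> \<and> continuous_map (seminorm_topology p) euclideanreal \<phi>}"

definition weak_star :: "(nat \<Rightarrow> 'a::real_vector \<Rightarrow> real) \<Rightarrow> ('a \<Rightarrow> real) topology" where
  "weak_star p = subtopology (powertop_real UNIV) (top_dual p)"

definition fun_convex_hull :: "('a \<Rightarrow> real) set \<Rightarrow> ('a \<Rightarrow> real) set" where
  "fun_convex_hull S = {\<phi>. \<exists>(n::nat) c g. (\<forall>i<n. 0 \<le> c i \<and> g i \<in> S) \<and> (\<Sum>i<n. c i) = 1 \<and>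
       \<phi> = (\<lambda>x. \<Sum>i<n. c i * g i x)}"

end

theory Submission
  imports Defs
begin

text \<open>Since \<open>[a,b]\<close> is compact, \<open>f([a,b])\<close> is weak-* compact and hence pointwise bounded.
  A Fr\'echet space is a complete metric space, so by the Baire category theorem (uniform
  boundedness) \<open>f([a,b])\<close> is equicontinuous: all its members are bounded by some \<open>M\<close> on a basic
  neighbourhood \<open>V\<close> of \<open>0\<close>. The linear functionals bounded by \<open>M\<close> on \<open>V\<close> form a convex set of
  continuous functionals which is closed in \<open>\<real>\<^sup>E\<close> and, \<open>V\<close> being absorbing, contained in a product
  of compact intervals; by Tychonoff it is compact. It contains the convex hull of \<open>f([a,b])\<close>,
  hence also its closure.\<close>

lemma seminorm_scaleR: "seminorm q \<Longrightarrow> q (c *\<^sub>R x) = \<bar>c\<bar> * q x"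
  by (simp add: seminorm_def)

lemma seminorm_triangle: "seminorm q \<Longrightarrow> q (x + y) \<le> q x + q y"
  by (simp add: seminorm_def)

lemma seminorm_zero: "seminorm q \<Longrightarrow> q 0 = 0"
  using seminorm_scaleR[of q 0 0] by simp

lemma seminorm_minus: "seminorm q \<Longrightarrow> q (- x) = q x"
  using seminorm_scaleR[of q "-1" x] by simp

lemma seminorm_nonneg: "seminorm q \<Longrightarrow> 0 \<le> q x"
  using seminorm_triangle[of q x "- x"] seminorm_zero[of q] seminorm_minus[of q x] by simp

lemma seminorm_diff_commute: "seminorm q \<Longrightarrow> q (x - y) = q (y - x)"
  using seminorm_minus[of q "x - y"] by simp

lemma istopology_seminorm_open:
  fixes p :: "nat \<Rightarrow> 'a::real_vector \<Rightarrow> real"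
  shows "istopology (\<lambda>U. \<forall>x\<in>U. \<exists>F e. finite F \<and> e > 0 \<and> {y. \<forall>n\<in>F. p n (y - x) < e} \<subseteq> U)"
  unfolding istopology_def
proof (intro conjI allI impI ballI)
  fix S T x
  assume S: "\<forall>x\<in>S. \<exists>F e. finite F \<and> e > 0 \<and> {y. \<forall>n\<in>F. p n (y - x) < e} \<subseteq> S"
    and T: "\<forall>x\<in>T. \<exists>F e. finite F \<and> e > 0 \<and> {y. \<forall>n\<in>F. p n (y - x) < e} \<subseteq> T"
    and x: "x \<in> S \<inter> T"
  obtain F1 e1 where "finite F1" "e1 > 0" "{y. \<forall>n\<in>F1. p n (y - x) < e1} \<subseteq> S"
    using S x by blast
  moreover obtain F2 e2 where "finite F2" "e2 > 0" "{y. \<forall>n\<in>F2. p n (y - x) < e2} \<subseteq> T"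
    using T x by blast
  ultimately show "\<exists>F e. finite F \<and> e > 0 \<and> {y. \<forall>n\<in>F. p n (y - x) < e} \<subseteq> S \<inter> T"
    by (intro exI[of _ "F1 \<union> F2"] exI[of _ "min e1 e2"]) auto
next
  fix \<K> x
  assume "\<forall>K\<in>\<K>. \<forall>x\<in>K. \<exists>F e. finite F \<and> e > 0 \<and> {y. \<forall>n\<in>F. p n (y - x) < e} \<subseteq> K"
    and "x \<in> \<Union>\<K>"
  then show "\<exists>F e. finite F \<and> e > 0 \<and> {y. \<forall>n\<in>F. p n (y - x) < e} \<subseteq> \<Union>\<K>"
    by (meson Union_iff subset_iff)
qed

lemma openin_seminorm_topology:
  "openin (seminorm_topology p) U \<longleftrightarrow>
     (\<forall>x\<in>U. \<exists>F e. finite F \<and> e > 0 \<and> {y. \<forall>n\<in>F. p n (y - x) < e} \<subseteq> U)"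
  unfolding seminorm_topology_def topology_inverse'[OF istopology_seminorm_open] ..

lemma topspace_seminorm_topology [simp]: "topspace (seminorm_topology p) = UNIV"
proof -
  have "openin (seminorm_topology p) UNIV"
    unfolding openin_seminorm_topology by (intro ballI exI[of _ "{}"] exI[of _ 1]) auto
  then show ?thesis
    using openin_subset by blast
qed

section \<open>A complete metric on a Fr\'echet space\<close>

text \<open>Capping \<open>p n\<close> at \<open>1 / (n + 1)\<close> keeps the supremum finite and makes small balls depend on
  finitely many seminorms only.\<close>
definition frechet_dist :: "(nat \<Rightarrow> 'a::real_vector \<Rightarrow> real) \<Rightarrow> 'a \<Rightarrow> 'a \<Rightarrow> real" where
  "frechet_dist p x y = (SUP n. min (inverse (real n + 1)) (p n (x - y)))"

lemma frechet_dist_ge: "min (inverse (real n + 1)) (p n (x - y)) \<le> frechet_dist p x y"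
proof -
  have "inverse (real n + 1) \<le> 1" for n
    by (simp add: inverse_le_1_iff)
  then have "bdd_above (range (\<lambda>n. min (inverse (real n + 1)) (p n (x - y))))"
    by (intro bdd_aboveI[of _ 1]) (auto intro: min.coboundedI1 order_trans)
  then show ?thesis
    unfolding frechet_dist_def by (rule cSUP_upper[rotated]) simp
qed

lemma frechet_dist_le:
  "(\<And>n. min (inverse (real n + 1)) (p n (x - y)) \<le> B) \<Longrightarrow> frechet_dist p x y \<le> B"
  unfolding frechet_dist_def by (rule cSUP_least) auto

lemma seminorm_less_if_frechet_dist_less:
  assumes "frechet_dist p x y < d" "d \<le> inverse (real n + 1)"
  shows "p n (x - y) < d"
  using frechet_dist_ge[of n p x y] assms by linarith

lemma frechet_dist_less_if_seminorms_less:
  assumes "\<And>n. n < N \<Longrightarrow> p n (x - y) < e" "e < r" "inverse (real N + 1) < r"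
  shows "frechet_dist p x y < r"
proof -
  have "frechet_dist p x y \<le> max e (inverse (real N + 1))"
  proof (rule frechet_dist_le)
    fix n
    show "min (inverse (real n + 1)) (p n (x - y)) \<le> max e (inverse (real N + 1))"
    proof (cases "n < N")
      case True
      then show ?thesis using assms(1)[of n] by linarith
    next
      case False
      then have "inverse (real n + 1) \<le> inverse (real N + 1)"
        by (simp add: le_imp_inverse_le)
      then show ?thesis by linarith
    qed
  qed
  then show ?thesis
    using assms by linarith
qed

lemma Metric_space_frechet_dist:
  assumes "\<And>n. seminorm (p n)" and "\<And>x. x \<noteq> 0 \<Longrightarrow> \<exists>n. p n x \<noteq> 0"
  shows "Metric_space UNIV (frechet_dist p)"
proof
  fix x y z :: 'a
  have nonneg: "0 \<le> p n v" for n v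
    using seminorm_nonneg[OF assms(1)] .
  show "0 \<le> frechet_dist p x y"
    using frechet_dist_ge[of 0 p x y] nonneg[of 0 "x - y"] by simp
  show "frechet_dist p x y = frechet_dist p y x"
    unfolding frechet_dist_def using seminorm_diff_commute[OF assms(1)] by metis
  show "frechet_dist p x y = 0 \<longleftrightarrow> x = y"
  proof
    assume "frechet_dist p x y = 0"
    then have "p n (x - y) = 0" for n
      using frechet_dist_ge[of n p x y] nonneg[of n "x - y"] by (simp add: min_le_iff_disj)
    then show "x = y"
      using assms(2)[of "x - y"] by auto
  next
    assume "x = y"
    then have "frechet_dist p x y \<le> 0"
      by (intro frechet_dist_le) (simp add: seminorm_zero[OF assms(1)])
    then show "frechet_dist p x y = 0"
      using \<open>0 \<le> frechet_dist p x y\<close> by linarith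
  qed
  show "frechet_dist p x z \<le> frechet_dist p x y + frechet_dist p y z"
  proof (rule frechet_dist_le)
    fix n
    have "p n (x - z) \<le> p n (x - y) + p n (y - z)"
      using seminorm_triangle[OF assms(1), of n "x - y" "y - z"] by simp
    moreover have "min i c \<le> min i a + min i b" if "c \<le> a + b" "0 \<le> a" "0 \<le> b" "0 < i"
      for a b c i :: real
      using that by (simp add: min_def)
    ultimately have "min (inverse (real n + 1)) (p n (x - z)) \<le>
        min (inverse (real n + 1)) (p n (x - y)) + min (inverse (real n + 1)) (p n (y - z))"
      using nonneg[of n "x - y"] nonneg[of n "y - z"] by simp
    then show "min (inverse (real n + 1)) (p n (x - z)) \<le> frechet_dist p x y + frechet_dist p y z"
      using frechet_dist_ge[of n p x y] frechet_dist_ge[of n p y z] by linarith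
  qed
qed

lemma eventually_frechet_dist_less:
  assumes "\<And>n e. e > 0 \<Longrightarrow> \<exists>N. \<forall>i\<ge>N. p n (\<sigma> i - l) < e" and "\<epsilon> > 0"
  shows "eventually (\<lambda>i. frechet_dist p (\<sigma> i) l < \<epsilon>) sequentially"
proof -
  obtain K where K: "inverse (real (Suc K)) < \<epsilon>"
    using reals_Archimedean[OF assms(2)] by blast
  have "\<forall>n\<in>{..<K}. eventually (\<lambda>i. p n (\<sigma> i - l) < \<epsilon>/2) sequentially"
    using assms(1)[of "\<epsilon>/2"] assms(2) by (simp add: eventually_sequentially)
  then have "eventually (\<lambda>i. \<forall>n\<in>{..<K}. p n (\<sigma> i - l) < \<epsilon>/2) sequentially"
    by (rule eventually_ball_finite[rotated]) simp
  then show ?thesis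
  proof eventually_elim
    case (elim i)
    show ?case
      by (rule frechet_dist_less_if_seminorms_less[of K p _ _ "\<epsilon>/2"])
        (use elim K assms(2) in \<open>auto simp: add.commute\<close>)
  qed
qed

lemma mcomplete_frechet_dist:
  assumes "frechet_seminorms p"
  shows "Metric_space.mcomplete UNIV (frechet_dist p)"
proof -
  interpret M: Metric_space UNIV "frechet_dist p"
    using assms by (intro Metric_space_frechet_dist) (auto simp: frechet_seminorms_def)
  show ?thesis
    unfolding M.mcomplete_def
  proof (intro allI impI)
    fix \<sigma> :: "nat \<Rightarrow> 'a"
    assume "M.MCauchy \<sigma>"
    then have Cauchy: "\<exists>N. \<forall>i j. N \<le> i \<longrightarrow> N \<le> j \<longrightarrow> frechet_dist p (\<sigma> i) (\<sigma> j) < d" if "d > 0" for d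
      using that unfolding M.MCauchy_def by blast
    have "\<exists>N. \<forall>i\<ge>N. \<forall>j\<ge>N. p n (\<sigma> i - \<sigma> j) < e" if "e > 0" for n e
    proof -
      have "min e (inverse (real n + 1)) > 0"
        using that by simp
      then obtain N where N: "\<forall>i j. N \<le> i \<longrightarrow> N \<le> j \<longrightarrow>
          frechet_dist p (\<sigma> i) (\<sigma> j) < min e (inverse (real n + 1))"
        using Cauchy by blast
      show ?thesis
      proof (intro exI[of _ N] allI impI)
        fix i j
        assume "N \<le> i" "N \<le> j"
        then have "p n (\<sigma> i - \<sigma> j) < min e (inverse (real n + 1))"
          using N by (intro seminorm_less_if_frechet_dist_less[of p _ _ _ n]) auto
        then show "p n (\<sigma> i - \<sigma> j) < e"
          by simp
      qed
    qed
    then obtain l where l: "\<And>n e. e > 0 \<Longrightarrow> \<exists>N. \<forall>i\<ge>N. p n (\<sigma> i - l) < e"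
      using assms unfolding frechet_seminorms_def by blast
    have "limitin M.mtopology \<sigma> l sequentially"
      unfolding M.limitin_metric using eventually_frechet_dist_less[OF l] by simp
    then show "\<exists>x. limitin M.mtopology \<sigma> x sequentially"
      by blast
  qed
qed

lemma openin_mtopology_frechet_dist:
  assumes "\<And>n. seminorm (p n)" and "\<And>x. x \<noteq> 0 \<Longrightarrow> \<exists>n. p n x \<noteq> 0"
    and "openin (seminorm_topology p) U"
  shows "openin (Metric_space.mtopology UNIV (frechet_dist p)) U"
proof -
  interpret M: Metric_space UNIV "frechet_dist p"
    using assms(1,2) by (rule Metric_space_frechet_dist)
  show ?thesis
    unfolding M.openin_mtopology
  proof (intro conjI allI impI)
    fix x
    assume "x \<in> U"
    then obtain F e where F: "finite F" "e > 0" "{y. \<forall>n\<in>F. p n (y - x) < e} \<subseteq> U"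
      using assms(3) unfolding openin_seminorm_topology by blast
    obtain k where k: "F \<subseteq> {..<k}"
      using finite_nat_bounded[OF F(1)] by blast
    have "p n (y - x) < e" if "frechet_dist p x y < min e (inverse (real k + 1))" "n \<in> F" for n y
    proof -
      have "n < k"
        using k that(2) by auto
      then have "min e (inverse (real k + 1)) \<le> inverse (real n + 1)"
        by (intro min.coboundedI2) (simp add: le_imp_inverse_le)
      then have "p n (x - y) < min e (inverse (real k + 1))"
        by (rule seminorm_less_if_frechet_dist_less[OF that(1)])
      then show ?thesis
        using seminorm_diff_commute[OF assms(1)] by (metis min.strict_boundedE)
    qed
    then have "M.mball x (min e (inverse (real k + 1))) \<subseteq> U"
      using F(3) by auto
    then show "\<exists>r>0. M.mball x r \<subseteq> U"
      using F(2) by (intro exI[of _ "min e (inverse (real k + 1))"]) auto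
  qed simp
qed

lemma continuous_map_mtopology_frechet_dist:
  assumes "\<And>n. seminorm (p n)" and "\<And>x. x \<noteq> 0 \<Longrightarrow> \<exists>n. p n x \<noteq> 0"
    and "continuous_map (seminorm_topology p) Y g"
  shows "continuous_map (Metric_space.mtopology UNIV (frechet_dist p)) Y g"
proof -
  interpret M: Metric_space UNIV "frechet_dist p"
    using assms(1,2) by (rule Metric_space_frechet_dist)
  have "continuous_map M.mtopology (seminorm_topology p) id"
    using openin_mtopology_frechet_dist[OF assms(1,2)]
    by (subst topology_finer_continuous_id[symmetric]) auto
  then show ?thesis
    using continuous_map_compose[OF _ assms(3)] by fastforce
qed

section \<open>Uniform boundedness\<close>

lemma frechet_Baire_category:
  fixes A :: "nat \<Rightarrow> 'a::real_vector set"
  assumes "frechet_seminorms p" and "\<Union>(range A) = UNIV"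
    and "\<And>k. closedin (Metric_space.mtopology UNIV (frechet_dist p)) (A k)"
  obtains k x r where "r > 0" "Metric_space.mball UNIV (frechet_dist p) x r \<subseteq> A k"
proof -
  interpret M: Metric_space UNIV "frechet_dist p"
    using assms(1) by (intro Metric_space_frechet_dist) (auto simp: frechet_seminorms_def)
  have "\<exists>k. M.mtopology interior_of A k \<noteq> {}"
  proof (rule ccontr)
    assume "\<nexists>k. M.mtopology interior_of A k \<noteq> {}"
    then have "M.mtopology interior_of \<Union>(range A) = {}"
      using M.metric_Baire_category_alt[OF mcomplete_frechet_dist[OF assms(1)], of "range A"] assms(3)
      by auto
    then show False
      using assms(2) interior_of_topspace[of M.mtopology] by simp
  qed
  then obtain k x where x: "x \<in> M.mtopology interior_of A k"
    by blast
  moreover have "openin M.mtopology (M.mtopology interior_of A k)"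
    by simp
  ultimately obtain r where "r > 0" "M.mball x r \<subseteq> M.mtopology interior_of A k"
    unfolding M.openin_mtopology by blast
  with that[of r x k] show thesis
    using interior_of_subset[of M.mtopology "A k"] by (meson subset_trans)
qed

lemma frechet_dist_add_less:
  assumes "\<And>n. seminorm (p n)" and "r > 0"
  obtains \<eta> N where "\<eta> > 0" "\<And>y. \<forall>n<N. p n y < \<eta> \<Longrightarrow> frechet_dist p x (x + y) < r"
proof -
  obtain N where N: "inverse (real (Suc N)) < r"
    using reals_Archimedean[OF assms(2)] by blast
  have "frechet_dist p x (x + y) < r" if "\<forall>n<N. p n y < r / 2" for y
  proof (rule frechet_dist_less_if_seminorms_less[of N p _ _ "r / 2"])
    show "p n (x - (x + y)) < r / 2" if "n < N" for n
      using \<open>\<forall>n<N. p n y < r / 2\<close> that seminorm_minus[OF assms(1)] by simp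
    show "r / 2 < r" "inverse (real N + 1) < r"
      using N assms(2) by (simp_all add: add.commute)
  qed
  then show thesis
    using that[of "r / 2" N] assms(2) by simp
qed

lemma closedin_pointwise_bounded_frechet_dist:
  assumes "\<And>n. seminorm (p n)" and "\<And>x. x \<noteq> 0 \<Longrightarrow> \<exists>n. p n x \<noteq> 0"
    and "S \<subseteq> top_dual p"
  shows "closedin (Metric_space.mtopology UNIV (frechet_dist p)) {x. \<forall>\<phi>\<in>S. \<bar>\<phi> x\<bar> \<le> c}"
proof -
  interpret M: Metric_space UNIV "frechet_dist p"
    using assms(1,2) by (rule Metric_space_frechet_dist)
  have "closedin M.mtopology {x. \<bar>\<phi> x\<bar> \<le> c}" if "\<phi> \<in> S" for \<phi>
  proof -
    have "continuous_map M.mtopology euclideanreal \<phi>"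
      using assms(3) that
      by (intro continuous_map_mtopology_frechet_dist[OF assms(1,2)]) (auto simp: top_dual_def)
    from closedin_continuous_map_preimage[OF this, of "{-c..c}"]
    show ?thesis
      by (simp add: abs_le_iff conj_commute minus_le_iff)
  qed
  moreover have eq: "{x. \<forall>\<phi>\<in>S. \<bar>\<phi> x\<bar> \<le> c} = \<Inter>(insert UNIV ((\<lambda>\<phi>. {x. \<bar>\<phi> x\<bar> \<le> c}) ` S))"
    by auto
  moreover have "closedin M.mtopology UNIV"
    using closedin_topspace[of M.mtopology] by simp
  ultimately show ?thesis
    unfolding eq by (intro closedin_Inter) auto
qed

lemma frechet_uniform_boundedness:
  assumes "frechet_seminorms p" and "S \<subseteq> top_dual p" and "\<And>x. \<exists>B. \<forall>\<phi>\<in>S. \<bar>\<phi> x\<bar> \<le> B"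
  obtains \<eta> N M where "\<eta> > 0" "\<And>\<phi> y. \<phi> \<in> S \<Longrightarrow> \<forall>n<N. p n y < \<eta> \<Longrightarrow> \<bar>\<phi> y\<bar> \<le> M"
proof -
  have sn: "\<And>n. seminorm (p n)" and sep: "\<And>x. x \<noteq> 0 \<Longrightarrow> \<exists>n. p n x \<noteq> 0"
    using assms(1) by (auto simp: frechet_seminorms_def)
  interpret M: Metric_space UNIV "frechet_dist p"
    using sn sep by (rule Metric_space_frechet_dist)
  define A where "A k = {x. \<forall>\<phi>\<in>S. \<bar>\<phi> x\<bar> \<le> real k}" for k :: nat
  have closed: "closedin M.mtopology (A k)" for k
    unfolding A_def by (rule closedin_pointwise_bounded_frechet_dist[OF sn sep assms(2)])
  have cover: "\<Union>(range A) = UNIV"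
  proof -
    have "\<exists>k. x \<in> A k" for x
    proof -
      obtain B where "\<forall>\<phi>\<in>S. \<bar>\<phi> x\<bar> \<le> B"
        using assms(3) by blast
      moreover obtain k :: nat where "B \<le> real k"
        using real_arch_simple by blast
      ultimately have "x \<in> A k"
        unfolding A_def by fastforce
      then show ?thesis ..
    qed
    then show ?thesis
      by blast
  qed
  obtain k x0 r where r: "r > 0" "M.mball x0 r \<subseteq> A k"
    by (rule frechet_Baire_category[OF assms(1) cover closed])
  obtain \<eta> N where \<eta>: "\<eta> > 0" "\<And>y. \<forall>n<N. p n y < \<eta> \<Longrightarrow> frechet_dist p x0 (x0 + y) < r"
    using frechet_dist_add_less[where p = p and x = x0, OF sn r(1)] by metis
  have "\<bar>\<phi> y\<bar> \<le> 2 * real k" if "\<phi> \<in> S" "\<forall>n<N. p n y < \<eta>" for \<phi> y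
  proof -
    have "x0 + y \<in> A k" "x0 \<in> A k"
      using r \<eta>(2)[OF that(2)] by auto
    then have "\<bar>\<phi> (x0 + y)\<bar> \<le> real k" "\<bar>\<phi> x0\<bar> \<le> real k"
      using that(1) unfolding A_def by auto
    moreover have "\<phi> (x0 + y) = \<phi> x0 + \<phi> y"
      using assms(2) that(1) by (auto simp: top_dual_def linear_add)
    ultimately show ?thesis
      by linarith
  qed
  then show thesis
    by (rule that[OF \<eta>(1)])
qed

section \<open>Alaoglu--Bourbaki compactness\<close>

definition linear_bounded_on :: "'a::real_vector set \<Rightarrow> real \<Rightarrow> ('a \<Rightarrow> real) set" where
  "linear_bounded_on V M = {\<phi>. linear \<phi> \<and> (\<forall>y\<in>V. \<bar>\<phi> y\<bar> \<le> M)}"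

lemma continuous_map_powertop_real_eval:
  "continuous_map (powertop_real UNIV) euclideanreal (\<lambda>\<phi>. \<phi> x)"
  using continuous_map_product_projection[of x UNIV "\<lambda>_. euclideanreal"] by simp

lemma closedin_linear_bounded_on:
  "closedin (powertop_real UNIV) (linear_bounded_on V M)"
proof -
  let ?X = "powertop_real (UNIV :: 'a set)"
  have eq: "closedin ?X {\<phi>. g \<phi> = h \<phi>}"
    if "continuous_map ?X euclideanreal g" "continuous_map ?X euclideanreal h" for g h
    using closedin_continuous_maps_eq[OF Hausdorff_space_euclidean that] by simp
  have add: "closedin ?X {\<phi>. \<phi> (x + y) = \<phi> x + \<phi> y}" for x y
    by (intro eq continuous_map_add continuous_map_powertop_real_eval)
  have scale: "closedin ?X {\<phi>. \<phi> (c *\<^sub>R x) = c * \<phi> x}" for c x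
    by (intro eq continuous_map_real_mult_left continuous_map_powertop_real_eval)
  have bound: "closedin ?X {\<phi>. y \<in> V \<longrightarrow> \<bar>\<phi> y\<bar> \<le> M}" for y
  proof (cases "y \<in> V")
    case True
    from closedin_continuous_map_preimage[OF continuous_map_powertop_real_eval, of "{-M..M}" y]
    show ?thesis
      using True by (simp add: abs_le_iff conj_commute minus_le_iff)
  next
    case False
    then show ?thesis
      using closedin_topspace[of ?X] by simp
  qed
  have "linear_bounded_on V M =
      (\<Inter>x. \<Inter>y. {\<phi>. \<phi> (x + y) = \<phi> x + \<phi> y}) \<inter> (\<Inter>c. \<Inter>x. {\<phi>. \<phi> (c *\<^sub>R x) = c * \<phi> x}) \<inter>
      (\<Inter>y. {\<phi>. y \<in> V \<longrightarrow> \<bar>\<phi> y\<bar> \<le> M})"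
    unfolding linear_bounded_on_def linear_iff by auto
  also have "closedin ?X \<dots>"
    using add scale bound by (intro closedin_Int closedin_INT) auto
  finally show ?thesis .
qed

text \<open>For absorbing \<open>V\<close> the set is a closed subset of a product of compact intervals.\<close>
lemma compactin_linear_bounded_on:
  assumes "\<And>x. \<exists>t>0. t *\<^sub>R x \<in> V"
  shows "compactin (powertop_real UNIV) (linear_bounded_on V M)"
proof -
  obtain t where t: "\<And>x. t x > 0" "\<And>x. t x *\<^sub>R x \<in> V"
    using assms by metis
  have "linear_bounded_on V M \<subseteq> (\<Pi>\<^sub>E x\<in>UNIV. {-(M / t x)..M / t x})"
  proof
    fix \<phi>
    assume "\<phi> \<in> linear_bounded_on V M"
    then have bound: "\<bar>\<phi> (t x *\<^sub>R x)\<bar> \<le> M" and "linear \<phi>" for x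
      using t(2) unfolding linear_bounded_on_def by auto
    have "t x * \<bar>\<phi> x\<bar> = \<bar>\<phi> (t x *\<^sub>R x)\<bar>" for x
      using \<open>linear \<phi>\<close> t(1)[of x] by (simp add: linear_scale abs_mult)
    then have "t x * \<bar>\<phi> x\<bar> \<le> M" for x
      using bound by simp
    then have "\<bar>\<phi> x\<bar> \<le> M / t x" for x
      using t(1)[of x] by (simp add: pos_le_divide_eq mult.commute)
    then show "\<phi> \<in> (\<Pi>\<^sub>E x\<in>UNIV. {-(M / t x)..M / t x})"
      by (simp add: PiE_iff abs_le_iff minus_le_iff)
  qed
  moreover have "compactin (powertop_real UNIV) (\<Pi>\<^sub>E x\<in>UNIV. {-(M / t x)..M / t x})"
    by (simp add: compactin_PiE)
  ultimately show ?thesis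
    using closed_compactin closedin_linear_bounded_on by blast
qed

lemma fun_convex_hull_subset_linear_bounded_on:
  assumes "S \<subseteq> linear_bounded_on V M"
  shows "fun_convex_hull S \<subseteq> linear_bounded_on V M"
proof
  fix \<phi>
  assume "\<phi> \<in> fun_convex_hull S"
  then obtain n :: nat and c g where cg: "\<forall>i<n. 0 \<le> c i \<and> g i \<in> S" "(\<Sum>i<n. c i) = 1"
    and \<phi>: "\<phi> = (\<lambda>x. \<Sum>i<n. c i * g i x)"
    unfolding fun_convex_hull_def by blast
  then have g: "linear (g i)" "\<forall>y\<in>V. \<bar>g i y\<bar> \<le> M" if "i < n" for i
    using assms that unfolding linear_bounded_on_def by auto
  have "linear (\<lambda>x. c i * g i x)" if "i < n" for i
    using linear_compose_scale_right[OF g(1)[OF that], of "c i"] by simp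
  then have "linear \<phi>"
    unfolding \<phi> by (intro linear_compose_sum) auto
  moreover have "\<bar>\<phi> y\<bar> \<le> M" if "y \<in> V" for y
  proof -
    have "\<bar>\<phi> y\<bar> \<le> (\<Sum>i<n. c i * \<bar>g i y\<bar>)"
      unfolding \<phi> using cg(1) sum_abs[of "\<lambda>i. c i * g i y" "{..<n}"] by (simp add: abs_mult)
    also have "\<dots> \<le> (\<Sum>i<n. c i * M)"
      using cg(1) g(2) that by (intro sum_mono mult_left_mono) auto
    also have "\<dots> = M"
      using cg(2) by (simp add: sum_distrib_right[symmetric])
    finally show ?thesis .
  qed
  ultimately show "\<phi> \<in> linear_bounded_on V M"
    unfolding linear_bounded_on_def by blast
qed

lemma seminorm_ball_absorbing:
  fixes p :: "nat \<Rightarrow> 'a::real_vector \<Rightarrow> real"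
  assumes "\<And>n. seminorm (p n)" and "\<eta> > 0"
  shows "\<exists>t>0. \<forall>n<N. p n (t *\<^sub>R x) < \<eta>"
proof -
  define Q where "Q = (\<Sum>n<N. p n x)"
  define t where "t = \<eta> / (2 * (Q + 1))"
  have Q: "0 \<le> Q"
    unfolding Q_def using seminorm_nonneg[OF assms(1)] by (simp add: sum_nonneg)
  have t: "t > 0"
    unfolding t_def using Q assms(2) by simp
  have "p n (t *\<^sub>R x) < \<eta>" if "n < N" for n
  proof -
    have "p n x \<le> Q"
      unfolding Q_def using that seminorm_nonneg[OF assms(1)] by (intro member_le_sum) auto
    then have "p n (t *\<^sub>R x) \<le> t * Q"
      using seminorm_scaleR[OF assms(1)] t by (simp add: mult_left_mono)
    also have "t * Q < \<eta>"
      unfolding t_def using Q assms(2) by (simp add: field_simps add_nonneg_pos)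
    finally show ?thesis .
  qed
  then show ?thesis
    using t by blast
qed

lemma linear_bounded_on_seminorm_ball_subset_top_dual:
  fixes p :: "nat \<Rightarrow> 'a::real_vector \<Rightarrow> real"
  assumes "\<And>n. seminorm (p n)" and "\<eta> > 0"
  shows "linear_bounded_on {y. \<forall>n<N. p n y < \<eta>} M \<subseteq> top_dual p"
proof
  fix \<phi>
  assume "\<phi> \<in> linear_bounded_on {y. \<forall>n<N. p n y < \<eta>} M"
  then have lin: "linear \<phi>" and bound: "\<And>y. \<forall>n<N. p n y < \<eta> \<Longrightarrow> \<bar>\<phi> y\<bar> \<le> M"
    unfolding linear_bounded_on_def by auto
  have "openin (seminorm_topology p) {x. \<phi> x \<in> U}" if "open U" for U
    unfolding openin_seminorm_topology
  proof
    fix x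
    assume "x \<in> {x. \<phi> x \<in> U}"
    then obtain \<epsilon> where \<epsilon>: "\<epsilon> > 0" "ball (\<phi> x) \<epsilon> \<subseteq> U"
      using \<open>open U\<close> openE by force
    define s where "s = (\<bar>M\<bar> + 1) / \<epsilon>"
    have s: "s > 0"
      unfolding s_def using \<epsilon> by (simp add: add_nonneg_pos)
    have "\<phi> y \<in> U" if "\<forall>n<N. p n (y - x) < \<eta> / s" for y
    proof -
      have "\<forall>n<N. p n (s *\<^sub>R (y - x)) < \<eta>"
        using that s seminorm_scaleR[OF assms(1)] by (simp add: pos_less_divide_eq mult.commute)
      then have "\<bar>\<phi> (s *\<^sub>R (y - x))\<bar> \<le> M"
        by (rule bound)
      moreover have "\<phi> (s *\<^sub>R (y - x)) = s * (\<phi> y - \<phi> x)"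
        using lin by (simp add: linear_scale linear_diff)
      ultimately have "s * \<bar>\<phi> y - \<phi> x\<bar> \<le> M"
        using s by (simp add: abs_mult)
      then have "\<bar>\<phi> y - \<phi> x\<bar> \<le> M / s"
        using s by (simp add: pos_le_divide_eq mult.commute)
      also have "M / s < \<epsilon>"
        unfolding s_def using \<epsilon>(1) mult_strict_right_mono[of M "\<bar>M\<bar> + 1" \<epsilon>]
        by (simp add: field_simps)
      finally show "\<phi> y \<in> U"
        using \<epsilon>(2) by (auto simp: dist_real_def abs_minus_commute)
    qed
    then show "\<exists>F e. finite F \<and> e > 0 \<and> {y. \<forall>n\<in>F. p n (y - x) < e} \<subseteq> {x. \<phi> x \<in> U}"
      using s assms(2) by (intro exI[of _ "{..<N}"] exI[of _ "\<eta> / s"]) auto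
  qed
  then have "continuous_map (seminorm_topology p) euclideanreal \<phi>"
    by (simp add: continuous_map_def)
  then show "\<phi> \<in> top_dual p"
    using lin by (simp add: top_dual_def)
qed

lemma topspace_weak_star [simp]: "topspace (weak_star p) = top_dual p"
  by (simp add: weak_star_def)

lemma compactin_weak_star_pointwise_bounded:
  assumes "compactin (weak_star p) S"
  shows "\<exists>B. \<forall>\<phi>\<in>S. \<bar>\<phi> x\<bar> \<le> B"
proof -
  have "continuous_map (weak_star p) euclideanreal (\<lambda>\<phi>. \<phi> x)"
    unfolding weak_star_def by (rule continuous_map_from_subtopology[OF continuous_map_powertop_real_eval])
  from image_compactin[OF assms this] have "compact ((\<lambda>\<phi>. \<phi> x) ` S)"
    by simp
  then have "bounded ((\<lambda>\<phi>. \<phi> x) ` S)"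
    by (rule compact_imp_bounded)
  then show ?thesis
    by (auto simp: bounded_real)
qed

lemma compactin_weak_star_closure_of:
  assumes "H \<subseteq> K" and "K \<subseteq> top_dual p" and "compactin (powertop_real UNIV) K"
  shows "compactin (weak_star p) (weak_star p closure_of H)"
proof -
  let ?X = "powertop_real (UNIV :: 'a set)"
  have "closedin ?X K"
    using assms(3) by (intro compactin_imp_closedin) (auto simp: Hausdorff_space_product_topology)
  with assms(1) have closure: "?X closure_of H \<subseteq> K"
    by (rule closure_of_minimal)
  then have "weak_star p closure_of H = ?X closure_of H"
    using assms(1,2) unfolding weak_star_def closure_of_subtopology by (auto simp: Int_absorb1)
  moreover have "compactin ?X (?X closure_of H)"
    using closed_compactin[OF assms(3) closure] by simp
  ultimately show ?thesis
    using closure assms(2) unfolding weak_star_def compactin_subtopology by auto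
qed

theorem proposition4:
  fixes p :: "nat \<Rightarrow> 'a::real_vector \<Rightarrow> real"
    and f :: "real \<Rightarrow> ('a \<Rightarrow> real)"
    and a b :: real
  assumes "frechet_seminorms p"
    and "continuous_map (top_of_set {a..b}) (weak_star p) f"
  shows "compactin (weak_star p) ((weak_star p) closure_of (fun_convex_hull (f ` {a..b})))"
proof -
  have seminorms: "\<And>n. seminorm (p n)"
    using assms(1) by (simp add: frechet_seminorms_def)
  define S where "S = f ` {a..b}"
  have "compactin (weak_star p) S"
    unfolding S_def using assms(2) by (rule image_compactin[rotated]) (simp add: compactin_subtopology)
  then have "S \<subseteq> top_dual p" "\<And>x. \<exists>B. \<forall>\<phi>\<in>S. \<bar>\<phi> x\<bar> \<le> B"
    using compactin_subset_topspace[of "weak_star p" S] compactin_weak_star_pointwise_bounded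
    by auto
  then obtain \<eta> N M where \<eta>: "\<eta> > 0"
    and bound: "\<And>\<phi> y. \<phi> \<in> S \<Longrightarrow> \<forall>n<N. p n y < \<eta> \<Longrightarrow> \<bar>\<phi> y\<bar> \<le> M"
    using frechet_uniform_boundedness[OF assms(1)] by metis
  define K where "K = linear_bounded_on {y. \<forall>n<N. p n y < \<eta>} M"
  have "S \<subseteq> K"
    using \<open>S \<subseteq> top_dual p\<close> bound by (auto simp: K_def linear_bounded_on_def top_dual_def)
  then have "fun_convex_hull S \<subseteq> K"
    unfolding K_def by (rule fun_convex_hull_subset_linear_bounded_on)
  moreover have "K \<subseteq> top_dual p"
    unfolding K_def using seminorms \<eta> by (rule linear_bounded_on_seminorm_ball_subset_top_dual)
  moreover have "compactin (powertop_real UNIV) K"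
    unfolding K_def using seminorm_ball_absorbing[OF seminorms \<eta>] by (intro compactin_linear_bounded_on) auto
  ultimately show ?thesis
    unfolding S_def by (rule compactin_weak_star_closure_of)
qed

end
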